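(* In the following setting, $J$ is coercive, i.e. $\lim_{[u]_s\to+\infty}J(u)/[u]_s=+\infty$ over $u\in H^s_0(\Omega)$. Setting: $n\ge1$, $s\in(0,1)$, $\Omega\subset\mathbb{R}^n$ open bounded with Lipschitz boundary, $K$ a measurable symmetric kernel with $\frac{c\,\chi_{[0,\varrho)}(|x-z|)}{|x-z|^{n+2s}}\le K(x,z)\le\frac{C}{|x-z|^{n+2s}}$ for some $c,C>0$, $\varrho\in(0,+\infty]$; $h:\mathbb{R}\to\mathbb{R}$ continuous, odd, strictly increasing, $\mathcal H(t):=\int_0^th(\tau)d\tau$; $\eta\in L^\infty(\Omega)$ with $\eta\ge0$; $\zeta\in L^2(\Omega)$; and $$J(u)=\frac14\iint_{\mathbb{R}^n\times\mathbb{R}^n}|u(x)-u(z)|^2K(x,z)\,dx\,dz+\int_\Omega\eta\,\mathcal H(u)\,dx-\int_\Omega\zeta u\,dx\quad\text{if }\eta\,(\mathcal H\circ u)\in L^1(\Omega),$$ $J(u)=+\infty$ otherwise.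
   Context: $H^s_0(\Omega)=\{u\in H^s(\mathbb{R}^n):u=0\text{ a.e. outside }\Omega\}$ and $[u]_s=\left(c_{n,s}\iint_{\mathbb{R}^n\times\mathbb{R}^n}\frac{|u(x)-u(y)|^2}{|x-y|^{n+2s}}dx\,dy\right)^{1/2}$ with $c_{n,s}=\frac{2^{2s}\Gamma\left(\frac{n+2s}{2}\right)}{\pi^{n/2}\Gamma(2-s)}s(1-s)$. *)

theory Defs
  imports "HOL-Analysis.Analysis"
begin

definition lipschitz_boundary :: "(real^'n) set \<Rightarrow> bool" where
  "lipschitz_boundary \<Omega> \<longleftrightarrow>
     (\<forall>x0 \<in> frontier \<Omega>. \<exists>r>0. \<exists>e L. \<exists>g :: real^'n \<Rightarrow> real.
        norm e = 1 \<and> lipschitz_on L {y. y \<bullet> e = 0} g \<and>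
        \<Omega> \<inter> ball x0 r = {x \<in> ball x0 r. x \<bullet> e > g (x - (x \<bullet> e) *\<^sub>R e)})"

definition cns :: "nat \<Rightarrow> real \<Rightarrow> real" where
  "cns n s = (2::real) powr (2 * s) * Gamma ((real n + 2 * s)/2) / (pi powr (real n / 2) * Gamma (2 - s))
             * s * (1 - s)"

definition gagliardo_integral :: "real \<Rightarrow> (real^'n \<Rightarrow> real) \<Rightarrow> ennreal" where
  "gagliardo_integral s u =
     (\<integral>\<^sup>+ p. ennreal (\<bar>u (fst p) - u (snd p)\<bar>^2 / dist (fst p) (snd p) powr (real CARD('n) + 2 * s))
        \<partial>(lebesgue :: ((real^'n) \<times> (real^'n)) measure))"

definition gagliardo_seminorm :: "real \<Rightarrow> (real^'n \<Rightarrow> real) \<Rightarrow> real" where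
  "gagliardo_seminorm s u = sqrt (cns CARD('n) s * enn2real (gagliardo_integral s u))"

definition Hs :: "real \<Rightarrow> (real^'n \<Rightarrow> real) set" where
  "Hs s = {u. u \<in> borel_measurable lebesgue \<and> integrable lebesgue (\<lambda>x. (u x)^2)
              \<and> gagliardo_integral s u < \<infinity>}"

definition Hs0 :: "real \<Rightarrow> (real^'n) set \<Rightarrow> (real^'n \<Rightarrow> real) set" where
  "Hs0 s \<Omega> = {u \<in> Hs s. AE x in lebesgue. x \<notin> \<Omega> \<longrightarrow> u x = 0}"

definition primH :: "(real \<Rightarrow> real) \<Rightarrow> real \<Rightarrow> real" where
  "primH h t = (LBINT \<tau>=ereal 0..ereal t. h \<tau>)"

definition energyJ :: "(real^'n \<Rightarrow> real^'n \<Rightarrow> real) \<Rightarrow> (real \<Rightarrow> real) \<Rightarrow> (real^'n \<Rightarrow> real)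
     \<Rightarrow> (real^'n \<Rightarrow> real) \<Rightarrow> (real^'n) set \<Rightarrow> (real^'n \<Rightarrow> real) \<Rightarrow> ereal" where
  "energyJ K h \<eta> \<zeta> \<Omega> u =
     (if set_integrable lebesgue \<Omega> (\<lambda>x. \<eta> x * primH h (u x)) then
        ereal (1/4) * enn2ereal (\<integral>\<^sup>+ p. ennreal (\<bar>u (fst p) - u (snd p)\<bar>^2 * K (fst p) (snd p))
                                    \<partial>(lebesgue :: ((real^'n) \<times> (real^'n)) measure))
        + ereal (set_lebesgue_integral lebesgue \<Omega> (\<lambda>x. \<eta> x * primH h (u x)))
        - ereal (set_lebesgue_integral lebesgue \<Omega> (\<lambda>x. \<zeta> x * u x))
      else \<infinity>)"

end

theory Submission
  imports Defs
begin

(* Write E_r(w) for the Gagliardo energy of w restricted to |x - z| < r, with 0 < r <= rho.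
   The lower kernel bound gives K >= c |x-z|^(-n-2s) there, and H >= 0, so
   J(u) >= c/4 E_r(u) - int zeta u.  Since u vanishes outside a ball B_R, telescoping
   w(x) along N shifts by h (N |h| >= 2R) and averaging over h in a small ball of
   shifts with |h| < r gives the Poincare inequality int u^2 <= A E_r(u).  The part of
   the full Gagliardo energy with |x - z| >= r is bounded by 4 (int u^2) times
   int_{|y| >= r} |y|^(-n-2s) dy, which is finite as n + 2s > n; hence
   [u]_s^2 <= const E_r(u).  Young's inequality absorbs int zeta u into half of
   c/4 E_r(u), so J(u) >= alpha [u]_s^2 - beta with alpha > 0, which is coercive. *)

definition gagliardo_energy :: "real \<Rightarrow> ('a::euclidean_space \<Rightarrow> real) \<Rightarrow> ennreal" where
  "gagliardo_energy p w =
     (\<integral>\<^sup>+q. ennreal (\<bar>w (fst q) - w (snd q)\<bar>^2 / dist (fst q) (snd q) powr p) \<partial>lborel)"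

definition local_gagliardo_energy :: "real \<Rightarrow> real \<Rightarrow> ('a::euclidean_space \<Rightarrow> real) \<Rightarrow> ennreal" where
  "local_gagliardo_energy r p w =
     (\<integral>\<^sup>+q. ennreal (if dist (fst q) (snd q) < r
                      then \<bar>w (fst q) - w (snd q)\<bar>^2 / dist (fst q) (snd q) powr p else 0) \<partial>lborel)"

lemma local_gagliardo_energy_le_gagliardo_energy: "local_gagliardo_energy r p w \<le> gagliardo_energy p w"
  unfolding local_gagliardo_energy_def gagliardo_energy_def by (intro nn_integral_mono) auto

lemma nn_integral_lborel_translate:
  fixes c :: "'a::euclidean_space"
  assumes [measurable]: "f \<in> borel_measurable borel"
  shows "(\<integral>\<^sup>+x. f (c + x) \<partial>lborel) = (\<integral>\<^sup>+x. f x \<partial>lborel)"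
proof -
  have "(\<integral>\<^sup>+x. f x \<partial>lborel) = (\<integral>\<^sup>+x. f x \<partial>distr lborel borel ((+) c))"
    by (simp add: lborel_distr_plus)
  also have "\<dots> = (\<integral>\<^sup>+x. f (c + x) \<partial>lborel)"
    by (rule nn_integral_distr) auto
  finally show ?thesis ..
qed

lemma nn_integral_lborel_pair:
  fixes f :: "'a::euclidean_space \<Rightarrow> 'b::euclidean_space \<Rightarrow> ennreal"
  assumes f: "(\<lambda>q. f (fst q) (snd q)) \<in> borel_measurable (borel \<Otimes>\<^sub>M borel)"
  shows "(\<integral>\<^sup>+q. f (fst q) (snd q) \<partial>lborel) = (\<integral>\<^sup>+x. \<integral>\<^sup>+y. f x y \<partial>lborel \<partial>lborel)"
    and "(\<integral>\<^sup>+q. f (fst q) (snd q) \<partial>lborel) = (\<integral>\<^sup>+y. \<integral>\<^sup>+x. f x y \<partial>lborel \<partial>lborel)"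
proof -
  have [measurable]: "(\<lambda>q. f (fst q) (snd q)) \<in> borel_measurable (lborel \<Otimes>\<^sub>M lborel)"
    using f by (simp cong: measurable_cong_sets)
  show "(\<integral>\<^sup>+q. f (fst q) (snd q) \<partial>lborel) = (\<integral>\<^sup>+x. \<integral>\<^sup>+y. f x y \<partial>lborel \<partial>lborel)"
    by (simp add: lborel_prod[symmetric] lborel.nn_integral_fst[symmetric])
  show "(\<integral>\<^sup>+q. f (fst q) (snd q) \<partial>lborel) = (\<integral>\<^sup>+y. \<integral>\<^sup>+x. f x y \<partial>lborel \<partial>lborel)"
    by (simp add: lborel_prod[symmetric] lborel_pair.nn_integral_snd[symmetric])
qed

lemma measurable_pair_lborel:
  "f \<in> borel_measurable (borel \<Otimes>\<^sub>M borel) \<Longrightarrow>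
    f \<in> borel_measurable (lborel :: ('a::euclidean_space \<times> 'b::euclidean_space) measure)"
  by (simp add: borel_prod)

lemma square_le_sum_shift_differences:
  fixes w :: "'a::real_normed_vector \<Rightarrow> real"
  assumes w0: "\<And>x. R \<le> norm x \<Longrightarrow> w x = 0" and hN: "2 * R \<le> real N * norm h"
  shows "(w x)^2 \<le> real N * (\<Sum>k<N. (w (x + real k *\<^sub>R h) - w (x + real (Suc k) *\<^sub>R h))^2)"
proof (cases "R \<le> norm x")
  case True
  then show ?thesis by (simp add: w0 sum_nonneg)
next
  case False
  have "norm (real N *\<^sub>R h) - norm x \<le> norm (x + real N *\<^sub>R h)"
    by (metis add.commute norm_diff_ineq)
  then have "w (x + real N *\<^sub>R h) = 0"
    using False hN by (intro w0) simp
  then have telescope: "(\<Sum>k<N. w (x + real k *\<^sub>R h) - w (x + real (Suc k) *\<^sub>R h)) = w x"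
    using sum_lessThan_telescope'[of "\<lambda>k. w (x + real k *\<^sub>R h)" N] by simp
  have "(\<Sum>k<N. 1 * (w (x + real k *\<^sub>R h) - w (x + real (Suc k) *\<^sub>R h)))^2
     \<le> (\<Sum>k<N. 1^2) * (\<Sum>k<N. (w (x + real k *\<^sub>R h) - w (x + real (Suc k) *\<^sub>R h))^2)"
    by (rule Cauchy_Schwarz_ineq_sum)
  then show ?thesis
    using telescope by simp
qed

lemma nn_integral_square_le_shift_difference:
  fixes w :: "'a::euclidean_space \<Rightarrow> real"
  assumes [measurable]: "w \<in> borel_measurable borel"
    and w0: "\<And>x. R \<le> norm x \<Longrightarrow> w x = 0" and hN: "2 * R \<le> real N * norm h"
  shows "(\<integral>\<^sup>+x. ennreal ((w x)^2) \<partial>lborel)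
    \<le> ennreal (real N * real N) * (\<integral>\<^sup>+x. ennreal ((w x - w (x + h))^2) \<partial>lborel)"
proof -
  define D where "D = (\<integral>\<^sup>+x. ennreal ((w x - w (x + h))^2) \<partial>lborel)"
  have shift: "(\<integral>\<^sup>+x. ennreal ((w (x + real k *\<^sub>R h) - w (x + real (Suc k) *\<^sub>R h))^2) \<partial>lborel) = D"
    for k
    using nn_integral_lborel_translate[of "\<lambda>x. ennreal ((w x - w (x + h))^2)" "real k *\<^sub>R h"]
    by (simp add: D_def algebra_simps)
  have "(\<integral>\<^sup>+x. ennreal ((w x)^2) \<partial>lborel)
     \<le> (\<integral>\<^sup>+x. ennreal (real N) *
           (\<Sum>k<N. ennreal ((w (x + real k *\<^sub>R h) - w (x + real (Suc k) *\<^sub>R h))^2)) \<partial>lborel)"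
  proof (intro nn_integral_mono)
    fix x
    show "ennreal ((w x)^2) \<le> ennreal (real N) *
           (\<Sum>k<N. ennreal ((w (x + real k *\<^sub>R h) - w (x + real (Suc k) *\<^sub>R h))^2))"
      using square_le_sum_shift_differences[of R w N h x] w0 hN
      by (simp add: sum_ennreal ennreal_mult'[symmetric] ennreal_leI del: of_nat_Suc)
  qed
  also have "\<dots> = ennreal (real N) * (\<Sum>k<N. D)"
    by (simp add: nn_integral_cmult nn_integral_sum shift del: sum_ennreal of_nat_Suc)
  also have "\<dots> = ennreal (real N * real N) * D"
    by (simp add: ennreal_mult' ennreal_of_nat_eq_real_of_nat mult.assoc)
  finally show ?thesis
    unfolding D_def .
qed

lemma nn_integral_square_le_local_gagliardo_energy:
  fixes w :: "'a::euclidean_space \<Rightarrow> real" and B :: "'a set"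
  assumes [measurable]: "w \<in> borel_measurable borel" "B \<in> sets borel"
    and w0: "\<And>x. R \<le> norm x \<Longrightarrow> w x = 0" and R: "0 < R" and p: "0 \<le> p"
    and B: "\<And>h. h \<in> B \<Longrightarrow> 2 * R \<le> real N * norm h \<and> norm h < r"
  shows "emeasure lborel B * (\<integral>\<^sup>+x. ennreal ((w x)^2) \<partial>lborel)
    \<le> ennreal (real N * real N * r powr p) * local_gagliardo_energy r p w"
proof -
  define \<Phi> where "\<Phi> y z = ennreal (if dist y z < r then \<bar>w y - w z\<bar>^2 / dist y z powr p else 0)"
    for y z
  have [measurable]: "(\<lambda>x. \<Phi> (f x) (g x)) \<in> borel_measurable M"
    if [measurable]: "f \<in> M \<rightarrow>\<^sub>M borel" "g \<in> M \<rightarrow>\<^sub>M borel" for f g and M :: "'c measure"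
    unfolding \<Phi>_def by measurable
  define P where "P = (\<integral>\<^sup>+x. ennreal ((w x)^2) \<partial>lborel)"
  have shift_bound: "P \<le> ennreal (real N * real N * r powr p) * (\<integral>\<^sup>+y. \<Phi> y (y + h) \<partial>lborel)"
    if "h \<in> B" for h
  proof -
    have hN: "2 * R \<le> real N * norm h" and hr: "norm h < r"
      using B[OF that] by auto
    then have "0 < real N * norm h"
      using R by linarith
    then have "0 < norm h"
      by (simp add: zero_less_mult_iff)
    then have ratio: "1 \<le> r powr p / norm h powr p"
      using hr p by (simp add: powr_mono2)
    have "(w y - w (y + h))^2 \<le> r powr p * (\<bar>w y - w (y + h)\<bar>^2 / norm h powr p)" for y
      using mult_left_mono[OF ratio, of "(w y - w (y + h))^2"]
      by (simp add: mult.commute[of "(w y - w (y + h))^2"])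
    then have "ennreal ((w y - w (y + h))^2) \<le> ennreal (r powr p) * \<Phi> y (y + h)" for y
      using hr by (simp add: \<Phi>_def dist_norm ennreal_mult'[symmetric] ennreal_leI)
    then have "(\<integral>\<^sup>+y. ennreal ((w y - w (y + h))^2) \<partial>lborel)
        \<le> ennreal (r powr p) * (\<integral>\<^sup>+y. \<Phi> y (y + h) \<partial>lborel)"
      by (subst nn_integral_cmult[symmetric]) (auto intro: nn_integral_mono)
    then have "ennreal (real N * real N) * (\<integral>\<^sup>+y. ennreal ((w y - w (y + h))^2) \<partial>lborel)
        \<le> ennreal (real N * real N * r powr p) * (\<integral>\<^sup>+y. \<Phi> y (y + h) \<partial>lborel)"
      by (subst ennreal_mult) (auto simp: mult.assoc intro: mult_left_mono)
    moreover have "P \<le> ennreal (real N * real N) * (\<integral>\<^sup>+y. ennreal ((w y - w (y + h))^2) \<partial>lborel)"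
      unfolding P_def by (rule nn_integral_square_le_shift_difference[where R = R]) (use w0 hN in auto)
    ultimately show ?thesis
      by (rule order_trans[rotated])
  qed
  have "emeasure lborel B * P = (\<integral>\<^sup>+h. P * indicator B h \<partial>lborel)"
    by (simp add: nn_integral_cmult_indicator mult.commute)
  also have "\<dots> \<le> (\<integral>\<^sup>+h. ennreal (real N * real N * r powr p) * (\<integral>\<^sup>+y. \<Phi> y (y + h) \<partial>lborel) \<partial>lborel)"
    using shift_bound by (intro nn_integral_mono) (simp split: split_indicator)
  also have "\<dots> = ennreal (real N * real N * r powr p) * (\<integral>\<^sup>+h. \<integral>\<^sup>+y. \<Phi> y (y + h) \<partial>lborel \<partial>lborel)"
    by (rule nn_integral_cmult) measurable
  also have "(\<integral>\<^sup>+h. \<integral>\<^sup>+y. \<Phi> y (y + h) \<partial>lborel \<partial>lborel) = (\<integral>\<^sup>+y. \<integral>\<^sup>+h. \<Phi> y (y + h) \<partial>lborel \<partial>lborel)"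
    by (rule lborel_pair.Fubini') measurable
  also have "\<dots> = (\<integral>\<^sup>+y. \<integral>\<^sup>+z. \<Phi> y z \<partial>lborel \<partial>lborel)"
    by (intro nn_integral_cong nn_integral_lborel_translate) measurable
  also have "\<dots> = (\<integral>\<^sup>+q. \<Phi> (fst q) (snd q) \<partial>lborel)"
    by (rule nn_integral_lborel_pair(1)[symmetric]) measurable
  also have "\<dots> = local_gagliardo_energy r p w"
    by (simp add: local_gagliardo_energy_def \<Phi>_def)
  finally show ?thesis
    unfolding P_def .
qed

lemma local_gagliardo_poincare:
  assumes R: "0 < R" and r: "0 < r" and p: "0 \<le> p"
  obtains A :: real where "0 < A"
    "\<And>w::'a::euclidean_space \<Rightarrow> real. w \<in> borel_measurable borel \<Longrightarrow>
       (\<And>x. R \<le> norm x \<Longrightarrow> w x = 0) \<Longrightarrow>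
       (\<integral>\<^sup>+x. ennreal ((w x)^2) \<partial>lborel) \<le> ennreal A * local_gagliardo_energy r p w"
proof -
  obtain N :: nat where N: "8 * R / r \<le> real N"
    using real_arch_simple by blast
  moreover have "0 < 8 * R / r"
    using R r by simp
  ultimately have "0 < real N"
    by linarith
  obtain a :: 'a where a: "norm a = r / 2"
    using vector_choose_size r by (metis less_eq_real_def half_gt_zero)
  define m where "m = unit_ball_vol (real DIM('a)) * (r / 4) ^ DIM('a)"
  have m: "0 < m" "emeasure lborel (ball a (r / 4)) = ennreal m"
    using r by (auto simp: m_def emeasure_ball)
  define A where "A = real N * real N * r powr p / m"
  have shells: "2 * R \<le> real N * norm h \<and> norm h < r" if "h \<in> ball a (r / 4)" for h
  proof -
    have "r / 4 < norm h" "norm h < r"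
      using that a norm_triangle_ineq2[of a h] norm_triangle_ineq3[of h a]
      by (auto simp: dist_norm norm_minus_commute)
    moreover have "2 * R \<le> real N * (r / 4)"
      using N r by (simp add: field_simps)
    moreover have "real N * (r / 4) < real N * norm h"
      using \<open>0 < real N\<close> \<open>r / 4 < norm h\<close> by simp
    ultimately show ?thesis
      by linarith
  qed
  show ?thesis
  proof
    show "0 < A"
      using \<open>0 < real N\<close> r m by (simp add: A_def)
  next
    fix w :: "'a \<Rightarrow> real"
    assume "w \<in> borel_measurable borel" "\<And>x. R \<le> norm x \<Longrightarrow> w x = 0"
    then have "ennreal m * (\<integral>\<^sup>+x. ennreal ((w x)^2) \<partial>lborel)
        \<le> ennreal (real N * real N * r powr p) * local_gagliardo_energy r p w"
      using nn_integral_square_le_local_gagliardo_energy[of w "ball a (r / 4)" R p N r] R p shells m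
      by simp
    then have "ennreal (1 / m) * (ennreal m * (\<integral>\<^sup>+x. ennreal ((w x)^2) \<partial>lborel))
        \<le> ennreal (1 / m) * (ennreal (real N * real N * r powr p) * local_gagliardo_energy r p w)"
      by (rule mult_left_mono) simp
    moreover have "ennreal (1 / m) * (ennreal K * L) = ennreal (K / m) * L" if "0 \<le> K" for K L
      using m that by (simp add: ennreal_mult[symmetric] mult.assoc[symmetric])
    ultimately show "(\<integral>\<^sup>+x. ennreal ((w x)^2) \<partial>lborel) \<le> ennreal A * local_gagliardo_energy r p w"
      using m r by (simp add: A_def)
  qed
qed

lemma exists_dyadic_shell:
  fixes t r :: real
  assumes r: "0 < r" and t: "r \<le> t"
  obtains k :: nat where "2^k * r \<le> t" "t < 2^Suc k * r"
proof -
  obtain n :: nat where "t / r < 2^n"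
    using real_arch_pow[of 2 "t / r"] by auto
  then have ex: "t < 2^n * r"
    using r by (simp add: field_simps)
  define m where "m = (LEAST n. t < 2^n * r)"
  have tm: "t < 2^m * r"
    unfolding m_def by (rule LeastI[of _ n]) (rule ex)
  then obtain k where mk: "m = Suc k"
    using t by (cases m) auto
  then have "\<not> t < 2^k * r"
    using not_less_Least[of k "\<lambda>n. t < 2^n * r"] by (simp add: m_def)
  with tm mk show ?thesis
    by (intro that[of k]) (auto simp: not_less)
qed

lemma nn_integral_norm_powr_outside_ball_finite:
  fixes r p :: real
  assumes r: "0 < r" and p: "DIM('a) < p"
  shows "(\<integral>\<^sup>+y. ennreal (if r \<le> norm y then 1 / norm y powr p else 0) \<partial>(lborel::'a::euclidean_space measure))
    < \<infinity>"
proof -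
  \<comment> \<open>Cover the region by the balls of the dyadic shells 2^k r <= |y| < 2^(k+1) r; since
      p > n, the resulting bounds form a geometric series of ratio 2^(n-p).\<close>
  define n where "n = DIM('a)"
  define q where "q = (2::real) powr (real n - p)"
  have q: "0 < q" "q < 1"
    using p by (auto simp: q_def n_def intro: powr_less_one)
  define f :: "nat \<Rightarrow> 'a \<Rightarrow> ennreal"
    where "f = (\<lambda>k. \<lambda>y. ennreal ((2^k * r) powr (-p)) * indicator (cball 0 (2^Suc k * r)) y)"
  have f_shell: "ennreal (if r \<le> norm y then 1 / norm y powr p else 0) \<le> (\<Sum>k. f k y)" for y :: 'a
  proof (cases "r \<le> norm y")
    case True
    then obtain k where k: "2^k * r \<le> norm y" "norm y < 2^Suc k * r"
      by (rule exists_dyadic_shell[OF r])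
    then have "(2^k * r) powr p \<le> norm y powr p"
      using r p by (intro powr_mono2) auto
    moreover have "0 < 2^k * r"
      using r by simp
    moreover from this have "0 < norm y"
      using k(1) by linarith
    ultimately have "1 / norm y powr p \<le> 1 / (2^k * r) powr p"
      by (intro divide_left_mono mult_pos_pos) auto
    then have "1 / norm y powr p \<le> (2^k * r) powr (-p)"
      by (simp add: powr_minus_divide)
    then have "ennreal (1 / norm y powr p) \<le> f k y"
      using k by (simp add: f_def ennreal_leI)
    also have "\<dots> \<le> (\<Sum>k. f k y)"
      using sum_le_suminf[OF summableI, of "{k}" "\<lambda>k. f k y"] by simp
    finally show ?thesis
      using True by simp
  qed simp
  have f_integral: "integral\<^sup>N lborel (f k) = ennreal (2 powr n * unit_ball_vol n * r powr (n - p) * q^k)"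
    for k
  proof -
    have "integral\<^sup>N lborel (f k)
        = ennreal ((2^k * r) powr (-p)) * ennreal (unit_ball_vol n * (2^Suc k * r) ^ n)"
      using r by (simp add: f_def nn_integral_cmult_indicator emeasure_cball n_def)
    also have "\<dots> = ennreal ((2^k * r) powr (-p) * (unit_ball_vol n * (2^Suc k * r) ^ n))"
      by (rule ennreal_mult'[symmetric]) simp
    also have "(2^k * r) powr (-p) * (unit_ball_vol n * (2^Suc k * r) ^ n)
        = 2 powr n * unit_ball_vol n * r powr (n - p) * (2 powr k) powr (n - p)"
      using r by (simp add: powr_realpow[symmetric] powr_mult powr_add[symmetric] algebra_simps)
    also have "(2 powr k) powr (n - p) = q^k"
      by (simp add: q_def powr_powr powr_realpow[symmetric] mult.commute)
    finally show ?thesis .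
  qed
  have "(\<integral>\<^sup>+y. ennreal (if r \<le> norm y then 1 / norm y powr p else 0) \<partial>(lborel::'a measure))
      \<le> (\<integral>\<^sup>+y. (\<Sum>k. f k y) \<partial>lborel)"
    using f_shell by (rule nn_integral_mono)
  also have "\<dots> = (\<Sum>k. integral\<^sup>N lborel (f k))"
    by (rule nn_integral_suminf) (simp add: f_def measurable)
  also have "\<dots> = (\<Sum>k. ennreal (2 powr n * unit_ball_vol n * r powr (n - p) * q^k))"
    by (simp only: f_integral)
  also have "\<dots> < \<infinity>"
  proof -
    have "summable (\<lambda>k. 2 powr n * unit_ball_vol n * r powr (n - p) * q^k)"
      using q by (intro summable_mult summable_geometric) simp
    then show ?thesis
      using q by (simp add: ennreal_suminf_neq_top less_top)
  qed
  finally show ?thesis .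
qed

lemma nn_integral_lborel_pair_dist:
  fixes v :: "'a::euclidean_space \<Rightarrow> ennreal" and \<phi> :: "real \<Rightarrow> ennreal"
  assumes [measurable]: "v \<in> borel_measurable borel" "\<phi> \<in> borel_measurable borel"
  shows "(\<integral>\<^sup>+q. v (fst q) * \<phi> (dist (fst q) (snd q)) \<partial>lborel)
      = (\<integral>\<^sup>+x. v x \<partial>lborel) * (\<integral>\<^sup>+y. \<phi> (norm y) \<partial>(lborel::'a measure))"
    and "(\<integral>\<^sup>+q. v (snd q) * \<phi> (dist (fst q) (snd q)) \<partial>lborel)
      = (\<integral>\<^sup>+x. v x \<partial>lborel) * (\<integral>\<^sup>+y. \<phi> (norm y) \<partial>(lborel::'a measure))"
proof -
  have "(\<integral>\<^sup>+z. \<phi> (dist x z) \<partial>lborel) = (\<integral>\<^sup>+y. \<phi> (norm y) \<partial>(lborel::'a measure))" for x :: 'a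
  proof -
    have "(\<integral>\<^sup>+z. \<phi> (dist x z) \<partial>lborel) = (\<integral>\<^sup>+y. \<phi> (dist x (x + y)) \<partial>lborel)"
      by (rule nn_integral_lborel_translate[symmetric]) measurable
    moreover have "dist x (x + y) = norm y" for y
      by (simp add: dist_norm)
    ultimately show ?thesis
      by simp
  qed
  moreover have "(\<integral>\<^sup>+x. \<phi> (dist x z) \<partial>lborel) = (\<integral>\<^sup>+y. \<phi> (norm y) \<partial>(lborel::'a measure))" for z :: 'a
    using nn_integral_lborel_translate[of "\<lambda>x. \<phi> (dist x z)" z] by (simp add: dist_norm)
  moreover have "(\<integral>\<^sup>+q. v (fst q) * \<phi> (dist (fst q) (snd q)) \<partial>lborel)
      = (\<integral>\<^sup>+x. \<integral>\<^sup>+z. v x * \<phi> (dist x z) \<partial>lborel \<partial>lborel)"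
    "(\<integral>\<^sup>+q. v (snd q) * \<phi> (dist (fst q) (snd q)) \<partial>lborel)
      = (\<integral>\<^sup>+z. \<integral>\<^sup>+x. v z * \<phi> (dist x z) \<partial>lborel \<partial>lborel)"
    by (rule nn_integral_lborel_pair; measurable)+
  ultimately show "(\<integral>\<^sup>+q. v (fst q) * \<phi> (dist (fst q) (snd q)) \<partial>lborel)
      = (\<integral>\<^sup>+x. v x \<partial>lborel) * (\<integral>\<^sup>+y. \<phi> (norm y) \<partial>(lborel::'a measure))"
    and "(\<integral>\<^sup>+q. v (snd q) * \<phi> (dist (fst q) (snd q)) \<partial>lborel)
      = (\<integral>\<^sup>+x. v x \<partial>lborel) * (\<integral>\<^sup>+y. \<phi> (norm y) \<partial>(lborel::'a measure))"
    by (simp_all add: nn_integral_cmult nn_integral_multc)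
qed

lemma square_diff_div_powr_le:
  fixes a b d p :: real
  assumes "0 < d"
  shows "\<bar>a - b\<bar>^2 / d powr p \<le> 2 * a^2 * (1 / d powr p) + 2 * b^2 * (1 / d powr p)"
proof -
  have "\<bar>a - b\<bar>^2 \<le> 2 * a^2 + 2 * b^2"
    using zero_le_power2[of "a + b"] unfolding power2_abs power2_diff power2_sum by linarith
  then show ?thesis
    using assms by (simp add: divide_right_mono add_divide_distrib[symmetric])
qed

lemma gagliardo_energy_le_local_plus_tail:
  fixes w :: "'a::euclidean_space \<Rightarrow> real"
  assumes [measurable]: "w \<in> borel_measurable borel" and r: "0 < r"
  shows "gagliardo_energy p w \<le> local_gagliardo_energy r p w
    + 4 * (\<integral>\<^sup>+y. ennreal (if r \<le> norm y then 1 / norm y powr p else 0) \<partial>(lborel::'a measure))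
        * (\<integral>\<^sup>+x. ennreal ((w x)^2) \<partial>lborel)"
proof -
  define T where "T = (\<integral>\<^sup>+y. ennreal (if r \<le> norm y then 1 / norm y powr p else 0) \<partial>(lborel::'a measure))"
  define P where "P = (\<integral>\<^sup>+x. ennreal ((w x)^2) \<partial>(lborel::'a measure))"
  define near where "near q = ennreal (if dist (fst q) (snd q) < r
      then \<bar>w (fst q) - w (snd q)\<bar>^2 / dist (fst q) (snd q) powr p else 0)" for q :: "'a \<times> 'a"
  define \<phi> where "\<phi> t = ennreal (if r \<le> t then 1 / t powr p else 0)" for t
  have [measurable]: "\<phi> \<in> borel_measurable borel"
    unfolding \<phi>_def by measurable
  have near_meas: "near \<in> borel_measurable lborel"
    unfolding near_def by (rule measurable_pair_lborel) measurable
  have near_integral: "(\<integral>\<^sup>+q. near q \<partial>lborel) = local_gagliardo_energy r p w"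
    by (simp add: local_gagliardo_energy_def near_def)
  have "(\<lambda>q. ennreal (2 * (w (fst q))^2) * \<phi> (dist (fst q) (snd q))) \<in> borel_measurable lborel"
    by (rule measurable_pair_lborel) measurable
  moreover have "(\<lambda>q. ennreal (2 * (w (snd q))^2) * \<phi> (dist (fst q) (snd q))) \<in> borel_measurable lborel"
    by (rule measurable_pair_lborel) measurable
  ultimately have tail_meas:
    "(\<lambda>q. ennreal (2 * (w (fst q))^2) * \<phi> (dist (fst q) (snd q))) \<in> borel_measurable lborel"
    "(\<lambda>q. ennreal (2 * (w (snd q))^2) * \<phi> (dist (fst q) (snd q))) \<in> borel_measurable lborel" .
  have pointwise: "ennreal (\<bar>w x - w z\<bar>^2 / dist x z powr p)
      \<le> near (x, z) + (ennreal (2 * (w x)^2) * \<phi> (dist x z) + ennreal (2 * (w z)^2) * \<phi> (dist x z))"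
    for x z
  proof (cases "dist x z < r")
    case False
    then have "0 < dist x z"
      using r by linarith
    then have "\<bar>w x - w z\<bar>^2 / dist x z powr p
        \<le> 2 * (w x)^2 * (1 / dist x z powr p) + 2 * (w z)^2 * (1 / dist x z powr p)"
      by (rule square_diff_div_powr_le)
    then show ?thesis
      using False
      by (simp add: \<phi>_def near_def ennreal_mult'[symmetric] ennreal_plus[symmetric]
          del: ennreal_plus ennreal_plus_if)
  qed (simp add: near_def)
  have "(\<integral>\<^sup>+x. ennreal (2 * (w x)^2) \<partial>lborel) = 2 * P"
    by (simp add: P_def ennreal_mult nn_integral_cmult)
  moreover have "(\<integral>\<^sup>+y. \<phi> (norm y) \<partial>(lborel::'a measure)) = T"
    by (simp add: T_def \<phi>_def)
  moreover have "(\<lambda>x. ennreal (2 * (w x)^2)) \<in> borel_measurable borel"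
    by measurable
  ultimately have tail:
    "(\<integral>\<^sup>+q. ennreal (2 * (w (fst q))^2) * \<phi> (dist (fst q) (snd q)) \<partial>lborel) = 2 * T * P"
    "(\<integral>\<^sup>+q. ennreal (2 * (w (snd q))^2) * \<phi> (dist (fst q) (snd q)) \<partial>lborel) = 2 * T * P"
    using nn_integral_lborel_pair_dist[of "\<lambda>x. ennreal (2 * (w x)^2)" \<phi>] by (simp_all add: ac_simps)
  have "gagliardo_energy p w \<le> (\<integral>\<^sup>+q. near q
      + (ennreal (2 * (w (fst q))^2) * \<phi> (dist (fst q) (snd q))
         + ennreal (2 * (w (snd q))^2) * \<phi> (dist (fst q) (snd q))) \<partial>lborel)"
    unfolding gagliardo_energy_def
  proof (rule nn_integral_mono)
    fix q :: "'a \<times> 'a"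
    show "ennreal (\<bar>w (fst q) - w (snd q)\<bar>^2 / dist (fst q) (snd q) powr p)
        \<le> near q + (ennreal (2 * (w (fst q))^2) * \<phi> (dist (fst q) (snd q))
           + ennreal (2 * (w (snd q))^2) * \<phi> (dist (fst q) (snd q)))"
      using pointwise[of "fst q" "snd q"] by simp
  qed
  also have "\<dots> = local_gagliardo_energy r p w + (2 * T * P + 2 * T * P)"
    using near_meas tail_meas by (simp add: nn_integral_add tail near_integral)
  also have "2 * T * P + 2 * T * P = 4 * T * P"
    by (metis distrib_right numeral_Bit0 numeral_plus_numeral one_plus_numeral)
  finally show ?thesis
    unfolding T_def P_def .
qed

lemma gagliardo_energy_le_local_gagliardo_energy:
  fixes R r p :: real
  assumes R: "0 < R" and r: "0 < r" and p: "DIM('a) < p"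
  obtains D :: real where "0 < D"
    "\<And>w::'a::euclidean_space \<Rightarrow> real. w \<in> borel_measurable borel \<Longrightarrow>
       (\<And>x. R \<le> norm x \<Longrightarrow> w x = 0) \<Longrightarrow>
       gagliardo_energy p w \<le> ennreal D * local_gagliardo_energy r p w"
proof -
  obtain A where A: "0 < A"
    "\<And>w::'a \<Rightarrow> real. w \<in> borel_measurable borel \<Longrightarrow> (\<And>x. R \<le> norm x \<Longrightarrow> w x = 0) \<Longrightarrow>
       (\<integral>\<^sup>+x. ennreal ((w x)^2) \<partial>lborel) \<le> ennreal A * local_gagliardo_energy r p w"
    using local_gagliardo_poincare[OF R r, of p] p by auto
  obtain T where T: "0 \<le> T"
    "(\<integral>\<^sup>+y. ennreal (if r \<le> norm y then 1 / norm y powr p else 0) \<partial>(lborel::'a measure)) = ennreal T"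
    using nn_integral_norm_powr_outside_ball_finite[OF r p] by (auto simp: less_top_ennreal)
  show ?thesis
  proof (rule that[of "1 + 4 * T * A"])
    show "0 < 1 + 4 * T * A"
      using A T by (simp add: add_pos_nonneg)
  next
    fix w :: "'a \<Rightarrow> real"
    assume w: "w \<in> borel_measurable borel" "\<And>x. R \<le> norm x \<Longrightarrow> w x = 0"
    have "gagliardo_energy p w
        \<le> local_gagliardo_energy r p w + 4 * ennreal T * (\<integral>\<^sup>+x. ennreal ((w x)^2) \<partial>lborel)"
      using gagliardo_energy_le_local_plus_tail[OF w(1) r, of p] by (simp add: T)
    also have "\<dots> \<le> local_gagliardo_energy r p w + 4 * ennreal T * (ennreal A * local_gagliardo_energy r p w)"
      using A(2)[OF w] by (intro add_left_mono mult_left_mono) auto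
    also have "\<dots> = ennreal (1 + 4 * T * A) * local_gagliardo_energy r p w"
      using A T by (simp add: ennreal_plus ennreal_mult' distrib_left distrib_right ac_simps)
    finally show "gagliardo_energy p w \<le> ennreal (1 + 4 * T * A) * local_gagliardo_energy r p w" .
  qed
qed

lemma AE_lborel_pair:
  fixes u w :: "'a::euclidean_space \<Rightarrow> real"
  assumes "AE x in lborel. u x = w x"
  shows "AE q in (lborel::('a \<times> 'a) measure). u (fst q) = w (fst q) \<and> u (snd q) = w (snd q)"
proof -
  obtain N where N: "N \<in> null_sets lborel" "{x \<in> space lborel. u x \<noteq> w x} \<subseteq> N"
    using assms by (auto elim!: AE_E simp: null_sets_def)
  then have "N \<times> UNIV \<union> UNIV \<times> N \<in> null_sets (lborel \<Otimes>\<^sub>M lborel)"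
    by (intro null_sets.Un lborel.times_in_null_sets1 lborel.times_in_null_sets2) auto
  then have "AE q in lborel \<Otimes>\<^sub>M lborel. u (fst q) = w (fst q) \<and> u (snd q) = w (snd q)"
    by (rule AE_I') (use N(2) in auto)
  then show ?thesis
    unfolding lborel_prod .
qed

lemma borel_representative_vanishing_outside_ball:
  fixes u :: "'a::euclidean_space \<Rightarrow> real"
  assumes u: "u \<in> borel_measurable lebesgue" and u0: "AE x in lebesgue. x \<notin> \<Omega> \<longrightarrow> u x = 0"
    and \<Omega>: "\<Omega> \<subseteq> ball 0 R"
  obtains w where "w \<in> borel_measurable borel" "\<And>x. R \<le> norm x \<Longrightarrow> w x = 0"
    "AE x in lborel. u x = w x"
proof -
  obtain v where v: "v \<in> borel_measurable lborel" "AE x in lborel. u x = v x"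
    using completion_ex_borel_measurable_real[OF u] by blast
  have [measurable]: "v \<in> borel_measurable borel"
    using v(1) by simp
  define w where "w x = (if norm x < R then v x else 0)" for x
  show ?thesis
  proof
    show "w \<in> borel_measurable borel"
      unfolding w_def by measurable
    show "w x = 0" if "R \<le> norm x" for x
      using that by (simp add: w_def)
    have "AE x in lborel. x \<notin> \<Omega> \<longrightarrow> u x = 0"
      using u0 by (simp add: AE_completion_iff)
    with v(2) show "AE x in lborel. u x = w x"
      by eventually_elim (use \<Omega> in \<open>auto simp: w_def subset_iff\<close>)
  qed
qed

lemma Hs0_borel_representative:
  fixes u :: "real^'n \<Rightarrow> real"
  assumes u: "u \<in> Hs0 s \<Omega>" and \<Omega>: "\<Omega> \<subseteq> ball 0 R"
  obtains w where "w \<in> borel_measurable borel" "\<And>x. R \<le> norm x \<Longrightarrow> w x = 0"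
    "AE x in lborel. u x = w x"
    "gagliardo_integral s u = gagliardo_energy (real CARD('n) + 2 * s) w"
    "(\<integral>\<^sup>+x. ennreal ((w x)^2) \<partial>lborel) = ennreal (\<integral>x. (u x)^2 \<partial>lebesgue)"
proof -
  have um: "u \<in> borel_measurable lebesgue" and u2: "integrable lebesgue (\<lambda>x. (u x)^2)"
    and u0: "AE x in lebesgue. x \<notin> \<Omega> \<longrightarrow> u x = 0"
    using u by (auto simp: Hs0_def Hs_def)
  obtain w where w: "w \<in> borel_measurable borel" "\<And>x. R \<le> norm x \<Longrightarrow> w x = 0"
    "AE x in lborel. u x = w x"
    using borel_representative_vanishing_outside_ball[OF um u0 \<Omega>] by blast
  show ?thesis
  proof (rule that[OF w])
    show "gagliardo_integral s u = gagliardo_energy (real CARD('n) + 2 * s) w"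
      unfolding gagliardo_integral_def gagliardo_energy_def nn_integral_completion
      by (rule nn_integral_cong_AE, rule eventually_mono[OF AE_lborel_pair[OF w(3)]]) auto
    have "(\<integral>\<^sup>+x. ennreal ((w x)^2) \<partial>lborel) = (\<integral>\<^sup>+x. ennreal ((u x)^2) \<partial>lebesgue)"
      unfolding nn_integral_completion
      by (rule nn_integral_cong_AE, rule eventually_mono[OF w(3)]) auto
    also have "\<dots> = ennreal (\<integral>x. (u x)^2 \<partial>lebesgue)"
      by (rule nn_integral_eq_integral[OF u2]) auto
    finally show "(\<integral>\<^sup>+x. ennreal ((w x)^2) \<partial>lborel) = ennreal (\<integral>x. (u x)^2 \<partial>lebesgue)" .
  qed
qed

lemma primH_nonneg:
  fixes h :: "real \<Rightarrow> real"
  assumes odd: "\<And>t. h (-t) = - h t" and mono: "strict_mono h"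
  shows "0 \<le> primH h t"
proof -
  have "h 0 = 0"
    using odd[of 0] by simp
  then have pos: "0 < x \<Longrightarrow> 0 < h x" and neg: "x < 0 \<Longrightarrow> h x < 0" for x
    using mono by (metis strict_monoD)+
  show ?thesis
  proof (cases "0 \<le> t")
    case True
    have "0 \<le> integral\<^sup>L lborel (\<lambda>x. indicator (einterval (ereal 0) (ereal t)) x *\<^sub>R h x)"
      by (intro integral_nonneg_AE AE_I2) (auto simp: indicator_def einterval_def less_imp_le pos)
    then show ?thesis
      using True by (simp add: primH_def interval_lebesgue_integral_def set_lebesgue_integral_def)
  next
    case False
    have "0 \<le> integral\<^sup>L lborel (\<lambda>x. - (indicator (einterval (ereal t) (ereal 0)) x *\<^sub>R h x))"
      by (intro integral_nonneg_AE AE_I2) (auto simp: indicator_def einterval_def less_imp_le neg)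
    then show ?thesis
      using False by (simp add: primH_def interval_lebesgue_integral_def set_lebesgue_integral_def)
  qed
qed

lemma set_integral_mult_le_young:
  fixes f g :: "'a \<Rightarrow> real"
  assumes f: "set_integrable M A (\<lambda>x. (f x)^2)" and g: "integrable M (\<lambda>x. (g x)^2)" and \<epsilon>: "0 < \<epsilon>"
  shows "(LINT x:A|M. f x * g x) \<le> (LINT x:A|M. (f x)^2) / (2 * \<epsilon>) + \<epsilon> / 2 * (\<integral>x. (g x)^2 \<partial>M)"
proof -
  define b where "b = (\<lambda>x. indicator A x * (f x)^2 / (2 * \<epsilon>) + \<epsilon> / 2 * (g x)^2)"
  have f': "integrable M (\<lambda>x. indicator A x * (f x)^2)"
    using f by (simp add: set_integrable_def)
  have young: "f x * g x \<le> (f x)^2 / (2 * \<epsilon>) + \<epsilon> / 2 * (g x)^2" for x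
  proof -
    have "0 \<le> (f x - \<epsilon> * g x)^2 / (2 * \<epsilon>)"
      using \<epsilon> by simp
    also have "\<dots> = (f x)^2 / (2 * \<epsilon>) - f x * g x + \<epsilon> / 2 * (g x)^2"
      using \<epsilon> by (simp add: power2_eq_square field_simps)
    finally show ?thesis
      by simp
  qed
  have "(LINT x:A|M. f x * g x) = (\<integral>x. indicator A x * (f x * g x) \<partial>M)"
    by (simp add: set_lebesgue_integral_def)
  also have "\<dots> \<le> (\<integral>x. b x \<partial>M)"
  proof (rule integral_mono')
    show "integrable M b"
      using f' g by (simp add: b_def)
    show "indicator A x * (f x * g x) \<le> b x" "0 \<le> b x" for x
      using young[of x] \<epsilon> by (auto simp: b_def indicator_def)
  qed
  also have "\<dots> = (LINT x:A|M. (f x)^2) / (2 * \<epsilon>) + \<epsilon> / 2 * (\<integral>x. (g x)^2 \<partial>M)"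
    unfolding b_def using f' g by (simp add: set_lebesgue_integral_def)
  finally show ?thesis .
qed

lemma cns_pos: "0 < s \<Longrightarrow> s < 1 \<Longrightarrow> 0 < cns n s"
  unfolding cns_def by (simp add: Gamma_real_pos)

lemma coercive_of_quadratic_lower_bound:
  fixes J :: "'b \<Rightarrow> ereal" and \<sigma> :: "'b \<Rightarrow> real"
  assumes \<alpha>: "0 < \<alpha>" and J: "\<And>u. u \<in> S \<Longrightarrow> ereal (\<alpha> * (\<sigma> u)^2 - \<beta>) \<le> J u"
  shows "\<forall>M::real. \<exists>R. \<forall>u \<in> S. \<sigma> u > R \<longrightarrow> J u / ereal (\<sigma> u) \<ge> ereal M"
proof (intro allI exI ballI impI)
  fix M :: real and u
  assume "u \<in> S" and "max 1 ((\<bar>M\<bar> + \<bar>\<beta>\<bar>) / \<alpha>) < \<sigma> u"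
  then have \<sigma>1: "1 \<le> \<sigma> u" and \<sigma>M: "\<bar>M\<bar> + \<bar>\<beta>\<bar> \<le> \<alpha> * \<sigma> u"
    using \<alpha> by (auto simp: field_simps)
  have "M * \<sigma> u \<le> \<alpha> * (\<sigma> u)^2 - \<beta>"
  proof -
    have "(\<bar>M\<bar> + \<bar>\<beta>\<bar>) * \<sigma> u \<le> \<alpha> * \<sigma> u * \<sigma> u"
      using \<sigma>M \<sigma>1 by (intro mult_right_mono) auto
    moreover have "\<bar>\<beta>\<bar> \<le> \<bar>\<beta>\<bar> * \<sigma> u" "M * \<sigma> u \<le> \<bar>M\<bar> * \<sigma> u"
      using \<sigma>1 by (auto simp: mult_le_cancel_left1 intro: mult_right_mono)
    ultimately show ?thesis
      by (simp add: power2_eq_square algebra_simps)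
  qed
  then have "ereal M \<le> ereal (\<alpha> * (\<sigma> u)^2 - \<beta>) / ereal (\<sigma> u)"
    using \<sigma>1 by (simp add: field_simps)
  also have "\<dots> \<le> J u / ereal (\<sigma> u)"
    using J[OF \<open>u \<in> S\<close>] \<sigma>1 by (intro ereal_divide_right_mono) auto
  finally show "J u / ereal (\<sigma> u) \<ge> ereal M" .
qed

lemma energyJ_ge_local_gagliardo_energy:
  fixes K :: "real^'n \<Rightarrow> real^'n \<Rightarrow> real" and u w :: "real^'n \<Rightarrow> real"
  assumes K_lower: "\<And>x z. x \<noteq> z \<Longrightarrow>
        (if ereal (dist x z) < rho then c else 0) / dist x z powr (real CARD('n) + 2 * s) \<le> K x z"
    and c: "0 < c" and r: "ereal r \<le> rho"
    and h: "\<And>t. h (-t) = - h t" "strict_mono h"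
    and \<eta>: "AE x in lebesgue. x \<in> \<Omega> \<longrightarrow> 0 \<le> \<eta> x"
    and [measurable]: "w \<in> borel_measurable borel" and uw: "AE x in lborel. u x = w x"
    and l: "local_gagliardo_energy r (real CARD('n) + 2 * s) w = ennreal l"
  shows "ereal (c / 4 * l - (LINT x:\<Omega>|lebesgue. \<zeta> x * u x)) \<le> energyJ K h \<eta> \<zeta> \<Omega> u"
proof (cases "set_integrable lebesgue \<Omega> (\<lambda>x. \<eta> x * primH h (u x))")
  case False
  then show ?thesis
    by (simp add: energyJ_def)
next
  case True
  define p where "p = real CARD('n) + 2 * s"
  define Q where "Q = (\<integral>\<^sup>+q. ennreal (\<bar>u (fst q) - u (snd q)\<bar>^2 * K (fst q) (snd q))
      \<partial>(lebesgue :: ((real^'n) \<times> (real^'n)) measure))"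
  define I1 where "I1 = (LINT x:\<Omega>|lebesgue. \<eta> x * primH h (u x))"
  define I2 where "I2 = (LINT x:\<Omega>|lebesgue. \<zeta> x * u x)"
  have J: "energyJ K h \<eta> \<zeta> \<Omega> u = ereal (1 / 4) * enn2ereal Q + ereal I1 - ereal I2"
    using True by (simp add: energyJ_def Q_def I1_def I2_def)
  have kernel: "ennreal c * ennreal (if dist x z < r then \<bar>w x - w z\<bar>^2 / dist x z powr p else 0)
      \<le> ennreal (\<bar>w x - w z\<bar>^2 * K x z)" for x z
  proof (cases "x \<noteq> z \<and> dist x z < r")
    case True
    then have "ereal (dist x z) < ereal r"
      by simp
    then have "ereal (dist x z) < rho"
      using r by (rule less_le_trans)
    then have "c / dist x z powr p \<le> K x z"
      using K_lower[of x z] True by (simp add: p_def)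
    then have "\<bar>w x - w z\<bar>^2 * (c / dist x z powr p) \<le> \<bar>w x - w z\<bar>^2 * K x z"
      by (rule mult_left_mono) simp
    moreover have "c * (\<bar>w x - w z\<bar>^2 / dist x z powr p) = \<bar>w x - w z\<bar>^2 * (c / dist x z powr p)"
      by simp
    ultimately show ?thesis
      using True c by (simp add: ennreal_mult'[symmetric] ennreal_leI del: times_divide_eq_right)
  next
    case False
    then have "(if dist x z < r then \<bar>w x - w z\<bar>^2 / dist x z powr p else 0) = 0"
      by auto
    then show ?thesis
      by simp
  qed
  have "ennreal c * local_gagliardo_energy r p w
      = (\<integral>\<^sup>+q. ennreal c * ennreal (if dist (fst q) (snd q) < r
            then \<bar>w (fst q) - w (snd q)\<bar>^2 / dist (fst q) (snd q) powr p else 0) \<partial>lborel)"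
    unfolding local_gagliardo_energy_def
    by (rule nn_integral_cmult[symmetric], rule measurable_pair_lborel) measurable
  also have "\<dots> \<le> (\<integral>\<^sup>+q. ennreal (\<bar>w (fst q) - w (snd q)\<bar>^2 * K (fst q) (snd q)) \<partial>lborel)"
    by (rule nn_integral_mono) (rule kernel)
  also have "\<dots> = Q"
    unfolding Q_def nn_integral_completion
    by (rule nn_integral_cong_AE, rule eventually_mono[OF AE_lborel_pair[OF uw]]) auto
  finally have Q_ge: "ennreal (c * l) \<le> Q"
    using c l by (simp add: p_def ennreal_mult')
  have "0 \<le> I1"
    unfolding I1_def set_lebesgue_integral_def
    using \<eta> by (intro integral_nonneg_AE, eventually_elim)
      (auto simp: indicator_def intro!: mult_nonneg_nonneg primH_nonneg[OF h])
  show ?thesis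
  proof (cases "Q = \<infinity>")
    case True
    then show ?thesis
      by (simp add: J I2_def)
  next
    case False
    then obtain q where q: "Q = ennreal q" "0 \<le> q"
      by (cases Q) auto
    then have "c * l \<le> q"
      using Q_ge c l by (simp add: ennreal_le_iff)
    then show ?thesis
      using \<open>0 \<le> I1\<close> q by (simp add: J I2_def)
  qed
qed

lemma Hs0_local_gagliardo_energy_bounds:
  fixes \<Omega> :: "(real^'n) set"
  assumes s: "0 < s" "s < 1" and \<Omega>: "bounded \<Omega>" and r: "0 < r"
  obtains A D :: real where "0 < A" "0 < D"
    "\<And>u. u \<in> Hs0 s \<Omega> \<Longrightarrow> \<exists>w l. w \<in> borel_measurable borel \<and> (AE x in lborel. u x = w x) \<and> 0 \<le> l \<and>
       local_gagliardo_energy r (real CARD('n) + 2 * s) w = ennreal l \<and>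
       (gagliardo_seminorm s u)^2 \<le> cns CARD('n) s * D * l \<and> (\<integral>x. (u x)^2 \<partial>lebesgue) \<le> A * l"
proof -
  define p where "p = real CARD('n) + 2 * s"
  have p: "0 \<le> p" "DIM(real^'n) < p"
    using s by (auto simp: p_def)
  obtain R where R: "0 < R" "\<Omega> \<subseteq> ball 0 R"
    using bounded_subset_ballD[OF \<Omega>] by blast
  obtain A where A: "0 < A"
    "\<And>w::real^'n \<Rightarrow> real. w \<in> borel_measurable borel \<Longrightarrow> (\<And>x. R \<le> norm x \<Longrightarrow> w x = 0) \<Longrightarrow>
       (\<integral>\<^sup>+x. ennreal ((w x)^2) \<partial>lborel) \<le> ennreal A * local_gagliardo_energy r p w"
    using local_gagliardo_poincare[OF R(1) r p(1)] by blast
  obtain D where D: "0 < D"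
    "\<And>w::real^'n \<Rightarrow> real. w \<in> borel_measurable borel \<Longrightarrow> (\<And>x. R \<le> norm x \<Longrightarrow> w x = 0) \<Longrightarrow>
       gagliardo_energy p w \<le> ennreal D * local_gagliardo_energy r p w"
    using gagliardo_energy_le_local_gagliardo_energy[OF R(1) r p(2)] by blast
  show ?thesis
  proof (rule that[OF A(1) D(1)])
    fix u
    assume u: "u \<in> Hs0 s \<Omega>"
    then have "gagliardo_integral s u < \<infinity>"
      by (simp add: Hs0_def Hs_def)
    obtain w where w: "w \<in> borel_measurable borel" "\<And>x. R \<le> norm x \<Longrightarrow> w x = 0"
      "AE x in lborel. u x = w x" and G: "gagliardo_integral s u = gagliardo_energy p w"
      and P: "(\<integral>\<^sup>+x. ennreal ((w x)^2) \<partial>lborel) = ennreal (\<integral>x. (u x)^2 \<partial>lebesgue)"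
      using Hs0_borel_representative[OF u R(2)] unfolding p_def by blast
    obtain g where g: "gagliardo_energy p w = ennreal g" "0 \<le> g"
      using \<open>gagliardo_integral s u < \<infinity>\<close> by (auto simp: G less_top_ennreal)
    obtain l where l: "local_gagliardo_energy r p w = ennreal l" "0 \<le> l"
      using local_gagliardo_energy_le_gagliardo_energy[of r p w] g(1)
      by (cases "local_gagliardo_energy r p w") (auto simp: top_unique)
    have "g \<le> D * l"
      using D(2)[OF w(1,2)] g l D(1) by (simp add: ennreal_mult'[symmetric] ennreal_le_iff)
    moreover have "(gagliardo_seminorm s u)^2 = cns CARD('n) s * g"
      using g s by (simp add: gagliardo_seminorm_def G cns_pos less_imp_le)
    ultimately have "(gagliardo_seminorm s u)^2 \<le> cns CARD('n) s * D * l"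
      using cns_pos[OF s] by (simp add: mult.assoc)
    moreover have "(\<integral>x. (u x)^2 \<partial>lebesgue) \<le> A * l"
      using A(2)[OF w(1,2)] P l A(1) by (simp add: ennreal_mult'[symmetric] ennreal_le_iff)
    ultimately show "\<exists>w l. w \<in> borel_measurable borel \<and> (AE x in lborel. u x = w x) \<and> 0 \<le> l \<and>
       local_gagliardo_energy r (real CARD('n) + 2 * s) w = ennreal l \<and>
       (gagliardo_seminorm s u)^2 \<le> cns CARD('n) s * D * l \<and> (\<integral>x. (u x)^2 \<partial>lebesgue) \<le> A * l"
      using w l unfolding p_def by blast
  qed
qed

lemma energyJ_quadratic_lower_bound:
  fixes \<Omega> :: "(real^'n) set" and K :: "real^'n \<Rightarrow> real^'n \<Rightarrow> real"
    and h :: "real \<Rightarrow> real" and \<eta> \<zeta> :: "real^'n \<Rightarrow> real"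
  assumes s: "0 < s" "s < 1" and \<Omega>: "bounded \<Omega>"
    and K_lower: "\<And>x z. x \<noteq> z \<Longrightarrow>
        (if ereal (dist x z) < rho then c else 0) / dist x z powr (real CARD('n) + 2 * s) \<le> K x z"
    and c: "0 < c" and rho: "0 < rho"
    and h: "\<And>t. h (-t) = - h t" "strict_mono h"
    and \<eta>: "AE x in lebesgue. x \<in> \<Omega> \<longrightarrow> 0 \<le> \<eta> x"
    and \<zeta>: "set_integrable lebesgue \<Omega> (\<lambda>x. (\<zeta> x)^2)"
  obtains \<alpha> \<beta> :: real where "0 < \<alpha>"
    "\<And>u. u \<in> Hs0 s \<Omega> \<Longrightarrow> ereal (\<alpha> * (gagliardo_seminorm s u)^2 - \<beta>) \<le> energyJ K h \<eta> \<zeta> \<Omega> u"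
proof -
  obtain r where r: "0 < r" "ereal r \<le> rho"
  proof (cases rho)
    case (real x)
    then show ?thesis
      using rho that[of x] by auto
  qed (use rho that[of 1] in auto)
  obtain A D where A: "0 < A" and D: "0 < D" and bounds: "\<And>u. u \<in> Hs0 s \<Omega> \<Longrightarrow>
      \<exists>w l. w \<in> borel_measurable borel \<and> (AE x in lborel. u x = w x) \<and> 0 \<le> l \<and>
       local_gagliardo_energy r (real CARD('n) + 2 * s) w = ennreal l \<and>
       (gagliardo_seminorm s u)^2 \<le> cns CARD('n) s * D * l \<and> (\<integral>x. (u x)^2 \<partial>lebesgue) \<le> A * l"
    using Hs0_local_gagliardo_energy_bounds[OF s \<Omega> r(1)] by blast
  define cn where "cn = cns CARD('n) s"
  have cn: "0 < cn"
    unfolding cn_def using s by (rule cns_pos)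
  define Z where "Z = (LINT x:\<Omega>|lebesgue. (\<zeta> x)^2)"
  show ?thesis
  proof (rule that[of "c / (8 * cn * D)" "2 * A * Z / c"])
    show "0 < c / (8 * cn * D)"
      using c cn D by simp
  next
    fix u
    assume u: "u \<in> Hs0 s \<Omega>"
    then have u2: "integrable lebesgue (\<lambda>x. (u x)^2)"
      by (simp add: Hs0_def Hs_def)
    obtain w l where w: "w \<in> borel_measurable borel" "AE x in lborel. u x = w x"
      and l: "0 \<le> l" "local_gagliardo_energy r (real CARD('n) + 2 * s) w = ennreal l"
      and seminorm: "(gagliardo_seminorm s u)^2 \<le> cn * D * l"
      and uA: "(\<integral>x. (u x)^2 \<partial>lebesgue) \<le> A * l"
      using bounds[OF u] unfolding cn_def by blast
    \<comment> \<open>Young's inequality with weight c/(4A) absorbs the linear term into half of c/4 l.\<close>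
    have "c / (4 * A) / 2 * (\<integral>x. (u x)^2 \<partial>lebesgue) \<le> c / (4 * A) / 2 * (A * l)"
      using uA c A by (intro mult_left_mono) auto
    also have "\<dots> = c / 8 * l"
      using A by simp
    finally have "c / (4 * A) / 2 * (\<integral>x. (u x)^2 \<partial>lebesgue) \<le> c / 8 * l" .
    moreover have "(LINT x:\<Omega>|lebesgue. \<zeta> x * u x)
        \<le> Z / (2 * (c / (4 * A))) + c / (4 * A) / 2 * (\<integral>x. (u x)^2 \<partial>lebesgue)"
      unfolding Z_def using \<zeta> u2 c A by (intro set_integral_mult_le_young) auto
    moreover have "Z / (2 * (c / (4 * A))) = 2 * A * Z / c"
      using c A by simp
    ultimately have "(LINT x:\<Omega>|lebesgue. \<zeta> x * u x) \<le> 2 * A * Z / c + c / 8 * l"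
      by linarith
    moreover have "c / (8 * cn * D) * (gagliardo_seminorm s u)^2 \<le> c / (8 * cn * D) * (cn * D * l)"
      using seminorm c cn D by (intro mult_left_mono) auto
    moreover have "c / (8 * cn * D) * (cn * D * l) = c / 8 * l"
      using cn D by simp
    ultimately have "c / (8 * cn * D) * (gagliardo_seminorm s u)^2 - 2 * A * Z / c
        \<le> c / 4 * l - (LINT x:\<Omega>|lebesgue. \<zeta> x * u x)"
      by linarith
    moreover have "ereal (c / 4 * l - (LINT x:\<Omega>|lebesgue. \<zeta> x * u x)) \<le> energyJ K h \<eta> \<zeta> \<Omega> u"
      by (rule energyJ_ge_local_gagliardo_energy[OF K_lower c r(2) h \<eta> w l(2)])
    ultimately show "ereal (c / (8 * cn * D) * (gagliardo_seminorm s u)^2 - 2 * A * Z / c)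
        \<le> energyJ K h \<eta> \<zeta> \<Omega> u"
      by (rule order_trans[OF ereal_less_eq(3)[THEN iffD2]])
  qed
qed

theorem lemma2p7:
  fixes \<Omega> :: "(real^'n) set"
    and s c C :: real and rho :: ereal
    and K :: "real^'n \<Rightarrow> real^'n \<Rightarrow> real"
    and h :: "real \<Rightarrow> real"
    and \<eta> \<zeta> :: "real^'n \<Rightarrow> real"
  assumes s: "0 < s" "s < 1"
    and \<Omega>: "open \<Omega>" "bounded \<Omega>" "lipschitz_boundary \<Omega>"
    and K_meas: "(\<lambda>p. K (fst p) (snd p)) \<in> borel_measurable (lebesgue :: ((real^'n) \<times> (real^'n)) measure)"
    and K_sym: "\<And>x z. K x z = K z x"
    and cC: "c > 0" "C > 0" and rho_pos: "rho > 0"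
    and K_lower: "\<And>x z. x \<noteq> z \<Longrightarrow>
        (if ereal (dist x z) < rho then c else 0) / dist x z powr (real CARD('n) + 2 * s) \<le> K x z"
    and K_upper: "\<And>x z. x \<noteq> z \<Longrightarrow> K x z \<le> C / dist x z powr (real CARD('n) + 2 * s)"
    and h: "continuous_on UNIV h" "\<And>t. h (-t) = - h t" "strict_mono h"
    and \<eta>_meas: "set_borel_measurable lebesgue \<Omega> \<eta>"
    and \<eta>_bdd: "\<exists>M. AE x in lebesgue. x \<in> \<Omega> \<longrightarrow> \<bar>\<eta> x\<bar> \<le> M"
    and \<eta>_nonneg: "AE x in lebesgue. x \<in> \<Omega> \<longrightarrow> \<eta> x \<ge> 0"
    and \<zeta>: "set_borel_measurable lebesgue \<Omega> \<zeta>" "set_integrable lebesgue \<Omega> (\<lambda>x. (\<zeta> x)^2)"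
  shows "\<forall>M::real. \<exists>R. \<forall>u \<in> Hs0 s \<Omega>. gagliardo_seminorm s u > R \<longrightarrow>
           energyJ K h \<eta> \<zeta> \<Omega> u / ereal (gagliardo_seminorm s u) \<ge> ereal M"
proof -
  obtain \<alpha> \<beta> where "0 < \<alpha>"
    "\<And>u. u \<in> Hs0 s \<Omega> \<Longrightarrow> ereal (\<alpha> * (gagliardo_seminorm s u)^2 - \<beta>) \<le> energyJ K h \<eta> \<zeta> \<Omega> u"
    using energyJ_quadratic_lower_bound[OF s \<Omega>(2) K_lower cC(1) rho_pos h(2,3) \<eta>_nonneg \<zeta>(2)] by blast
  then show ?thesis
    by (rule coercive_of_quadratic_lower_bound)
qed

end
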